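(* Let $\ell\ge2$ be an integer and $A,B\in\mathbb C$. Define $\tilde e_0,\dots,\tilde e_{\ell-1}$ by $\ell\tilde e_0=A$, $(\ell-1)\tilde e_1=-(A^2/\ell^2-B)$, and $$(\ell-(k+1))\tilde e_{k+1}=-\sum_{t=0}^k\tilde e_t\tilde e_{k-t},\qquad 1\le k\le\ell-2 .$$ Then $$q_\ell:=-\sum_{t=0}^{\ell-1}\tilde e_t\tilde e_{\ell-1-t}=\frac{(-1)^\ell}{(\ell!)^2}\prod_{j=0}^{\ell}\bigl(A-(\ell-2j)B^{1/2}\bigr),$$ where the right-hand side is independent of the choice of square root $B^{1/2}$ (it is a polynomial in $A,B$). *)

theory Defs
  imports Complex_Main
begin

end

theory Submission
  imports Defs "HOL-Computational_Algebra.Formal_Power_Series"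
begin

text \<open>
  The recursion says that \<open>E(x) = \<Sum> e\<^sub>k x\<^sup>k\<close> solves the Riccati equation
  \<open>x E' - l E + A - x E\<^sup>2 + B x = 0\<close> modulo \<open>x\<^sup>l\<close>, and \<open>q\<^sub>l\<close> is the coefficient
  of \<open>x\<^sup>l\<close> of its left-hand side. Since \<open>E\<^sub>m\<close> enters the coefficient of \<open>x\<^sup>m\<close> with
  the factor \<open>m - l\<close>, that coefficient is determined by the lower order ones, so \<open>E\<close>
  may be replaced by any other power series solving the equation modulo \<open>x\<^sup>l\<close>.
  For \<open>B = s\<^sup>2\<close> the substitution \<open>E = s - V'/V\<close> linearises the equation into
  \<open>x V'' - (l + 2 s x) V' + (l s - A) V = 0\<close>, which is Kummer's equation
  \<open>z w'' + (b - z) w' - a w = 0\<close> with \<open>z = 2 s x\<close>, \<open>b = -l\<close>, \<open>a = (A - l s) / (2 s)\<close>.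
  Its formal series solution \<open>V = \<Sum> d\<^sub>n x\<^sup>n\<close> fails only at order \<open>l\<close>, where the
  denominator \<open>n - l\<close> of the coefficient recursion vanishes; the defect is
  \<open>-(A + l s) d\<^sub>l x\<^sup>l\<close>, where \<open>A + l s\<close> is the factor \<open>j = l\<close> of the product and
  \<open>(-1)\<^sup>l (l!)\<^sup>2 d\<^sub>l\<close> is the product over \<open>j < l\<close>.
\<close>

definition riccati_residual :: "nat \<Rightarrow> 'a \<Rightarrow> 'a \<Rightarrow> 'a::comm_ring_1 fps \<Rightarrow> 'a fps" where
  "riccati_residual l A B E =
     fps_X * fps_deriv E - fps_const (of_nat l) * E + fps_const A
     - fps_X * E\<^sup>2 + fps_const B * fps_X"

lemma riccati_residual_nth:
  "fps_nth (riccati_residual l A B E) m =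
     (of_nat m - of_nat l) * fps_nth E m + (if m = 0 then A else - fps_nth (E\<^sup>2) (m - 1))
     + (if m = 1 then B else 0)"
  by (cases m) (auto simp: riccati_residual_def algebra_simps)

lemma fps_mult_nth_cong:
  assumes "\<And>i. i \<le> n \<Longrightarrow> fps_nth f i = fps_nth f' i"
    and "\<And>i. i \<le> n \<Longrightarrow> fps_nth g i = fps_nth g' i"
  shows "fps_nth (f * g) n = fps_nth (f' * g') n"
  unfolding fps_mult_nth using assms by (intro sum.cong) auto

lemma fps_nth_eq_if_riccati_residual_nth_eq:
  fixes E E' :: "'a::{idom,ring_char_0} fps"
  assumes "\<And>m. m < l \<Longrightarrow>
             fps_nth (riccati_residual l A B E) m = fps_nth (riccati_residual l A B E') m"
    and "k < l"
  shows "fps_nth E k = fps_nth E' k"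
  using assms(2)
proof (induction k rule: less_induct)
  case (less k)
  have "fps_nth (E\<^sup>2) (k - 1) = fps_nth (E'\<^sup>2) (k - 1)" if "k \<noteq> 0"
    unfolding power2_eq_square using less that by (intro fps_mult_nth_cong) auto
  with assms(1)[OF less.prems]
  have "(of_nat k - of_nat l) * fps_nth E k = (of_nat k - of_nat l) * fps_nth E' k"
    by (cases "k = 0") (simp_all add: riccati_residual_nth)
  moreover have "(of_nat k - of_nat l :: 'a) \<noteq> 0"
    using less.prems by simp
  ultimately show ?case
    by simp
qed

lemma riccati_residual_nth_top_determined:
  fixes E E' :: "'a::{idom,ring_char_0} fps"
  assumes "\<And>m. m < l \<Longrightarrow>
             fps_nth (riccati_residual l A B E) m = fps_nth (riccati_residual l A B E') m"
  shows "fps_nth (riccati_residual l A B E) l = fps_nth (riccati_residual l A B E') l"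
proof -
  have "fps_nth (E\<^sup>2) (l - 1) = fps_nth (E'\<^sup>2) (l - 1)" if "l \<noteq> 0"
    unfolding power2_eq_square using that fps_nth_eq_if_riccati_residual_nth_eq[OF assms]
    by (intro fps_mult_nth_cong) auto
  then show ?thesis
    by (simp add: riccati_residual_nth)
qed

text \<open>For \<open>n > l\<close> the factor \<open>j = l\<close> divides by zero, so these coefficients are \<open>0\<close>.\<close>

definition kummer_coeff :: "nat \<Rightarrow> 'a \<Rightarrow> 'a \<Rightarrow> nat \<Rightarrow> 'a::field_char_0" where
  "kummer_coeff l A s n =
     (\<Prod>j<n. (A - (of_nat l - 2 * of_nat j) * s) / (of_nat (Suc j) * (of_nat j - of_nat l)))"

lemma kummer_coeff_0 [simp]: "kummer_coeff l A s 0 = 1"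
  by (simp add: kummer_coeff_def)

lemma kummer_coeff_Suc:
  assumes "m \<noteq> l"
  shows "of_nat (Suc m) * (of_nat m - of_nat l) * kummer_coeff l A s (Suc m)
           = (A - (of_nat l - 2 * of_nat m) * s) * kummer_coeff l A s m"
proof -
  have "(of_nat (Suc m) * (of_nat m - of_nat l) :: 'a) \<noteq> 0"
    using assms of_nat_neq_0 by simp
  then show ?thesis
    by (simp add: kummer_coeff_def)
qed

lemma prod_Suc_mult_diff_eq_fact_square:
  "(\<Prod>j<l. of_nat (Suc j) * (of_nat j - of_nat l) :: 'a::field_char_0) = (-1) ^ l * (fact l)\<^sup>2"
proof -
  have "(\<Prod>j<l. of_nat (Suc j) :: 'a) = fact l"
    by (simp add: fact_prod_Suc atLeast0LessThan)
  moreover have "(\<Prod>j<l. of_nat j - of_nat l :: 'a) = (-1) ^ l * fact l"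
    using pochhammer_minus[of "of_nat l" l]
    by (simp add: pochhammer_prod atLeast0LessThan pochhammer_fact)
  ultimately show ?thesis
    by (simp add: prod.distrib power2_eq_square)
qed

lemma kummer_coeff_top:
  "kummer_coeff l A s l = (-1) ^ l / (fact l)\<^sup>2 * (\<Prod>j<l. A - (of_nat l - 2 * of_nat j) * s)"
  unfolding kummer_coeff_def prod_dividef prod_Suc_mult_diff_eq_fact_square
  by (cases "even l") simp_all

definition kummer_op :: "nat \<Rightarrow> 'a \<Rightarrow> 'a \<Rightarrow> 'a::comm_ring_1 fps \<Rightarrow> 'a fps" where
  "kummer_op l A s V =
     fps_X * fps_deriv (fps_deriv V)
     - (fps_const (of_nat l) + fps_const (2 * s) * fps_X) * fps_deriv V
     + fps_const (of_nat l * s - A) * V"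

lemma kummer_op_nth:
  "fps_nth (kummer_op l A s V) m =
     of_nat (Suc m) * (of_nat m - of_nat l) * fps_nth V (Suc m)
     - (A - (of_nat l - 2 * of_nat m) * s) * fps_nth V m"
  by (cases m) (simp_all add: kummer_op_def algebra_simps)

definition kummer_series :: "nat \<Rightarrow> 'a \<Rightarrow> 'a \<Rightarrow> 'a::field_char_0 fps" where
  "kummer_series l A s = Abs_fps (kummer_coeff l A s)"

lemma kummer_op_kummer_series:
  "kummer_op l A s (kummer_series l A s) =
     - (fps_const ((A + of_nat l * s) * kummer_coeff l A s l) * fps_X ^ l)"
proof (rule fps_ext)
  fix m
  show "fps_nth (kummer_op l A s (kummer_series l A s)) m =
        fps_nth (- (fps_const ((A + of_nat l * s) * kummer_coeff l A s l) * fps_X ^ l)) m"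
    using kummer_coeff_Suc[of m l A s]
    by (cases "m = l")
      (simp_all add: kummer_op_nth kummer_series_def fps_X_power_mult_right_nth algebra_simps)
qed

lemma riccati_residual_log_deriv:
  fixes V :: "'a::field fps"
  assumes "fps_nth V 0 \<noteq> 0"
  shows "riccati_residual l A (s\<^sup>2) (fps_const s - fps_deriv V * inverse V) * V
           = - kummer_op l A s V"
proof -
  define W where "W = inverse V"
  have VW: "V * W = 1"
    unfolding W_def using assms by (rule inverse_mult_eq_1')
  have dW: "fps_deriv W = - fps_deriv V * W\<^sup>2"
    unfolding W_def using assms by (rule fps_inverse_deriv)
  have "fps_deriv (fps_const s - fps_deriv V * W)
          = - (fps_deriv (fps_deriv V) * W + fps_deriv V * fps_deriv W)"
    by simp
  moreover have "fps_const (s\<^sup>2) = fps_const s ^ 2" "fps_const (2 * s) = 2 * fps_const s"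
    "fps_const (of_nat l * s - A) = fps_const (of_nat l) * fps_const s - fps_const A"
    by (simp_all add: fps_numeral_fps_const)
  ultimately show ?thesis
    unfolding W_def[symmetric] riccati_residual_def kummer_op_def
    using VW dW by algebra
qed

lemma riccati_residual_kummer_log_deriv_nth:
  fixes A s :: "'a::field_char_0"
  assumes "m \<le> l"
  shows "fps_nth (riccati_residual l A (s\<^sup>2)
            (fps_const s - fps_deriv (kummer_series l A s) * inverse (kummer_series l A s))) m
         = (if m = l then (A + of_nat l * s) * kummer_coeff l A s l else 0)"
proof -
  define V where "V = kummer_series l A s"
  define c where "c = (A + of_nat l * s) * kummer_coeff l A s l"
  define R where "R = riccati_residual l A (s\<^sup>2) (fps_const s - fps_deriv V * inverse V)"
  have V0: "fps_nth V 0 = 1"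
    by (simp add: V_def kummer_series_def)
  have "R * V = - kummer_op l A s V"
    unfolding R_def using V0 by (intro riccati_residual_log_deriv) simp
  also have "\<dots> = fps_const c * fps_X ^ l"
    unfolding V_def c_def kummer_op_kummer_series by simp
  finally have RV: "R * V = fps_const c * fps_X ^ l" .
  have "R = R * V * inverse V"
    using inverse_mult_eq_1'[of V] V0 by (simp add: mult.assoc)
  also have "\<dots> = fps_X ^ l * (fps_const c * inverse V)"
    by (simp add: RV mult_ac)
  finally have "R = fps_X ^ l * (fps_const c * inverse V)" .
  then show ?thesis
    unfolding V_def[symmetric] R_def[symmetric] c_def[symmetric]
    using assms V0 by (simp add: fps_X_power_mult_nth)
qed

lemma fps_square_Abs_fps_nth: "fps_nth ((Abs_fps e)\<^sup>2) k = (\<Sum>t = 0..k. e t * e (k - t))"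
  by (simp add: power2_eq_square fps_mult_nth)

lemma riccati_residual_nth_eq_0_below:
  fixes A B :: "'a::field_char_0"
  assumes "of_nat l * e 0 = A"
    and "of_nat (l - 1) * e 1 = - (A^2 / (of_nat l)^2 - B)"
    and "\<And>k. 1 \<le> k \<Longrightarrow> k \<le> l - 2 \<Longrightarrow>
           of_nat (l - (k + 1)) * e (k + 1) = - (\<Sum>t = 0..k. e t * e (k - t))"
    and "m < l"
  shows "fps_nth (riccati_residual l A B (Abs_fps e)) m = 0"
proof -
  consider "m = 0" | "m = 1" | k where "m = Suc (Suc k)"
    by (metis One_nat_def not0_implies_Suc)
  then show ?thesis
  proof cases
    case 1
    then show ?thesis using assms(1) by (simp add: riccati_residual_nth)
  next
    case 2
    have "e 0 = A / of_nat l"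
      using assms(1,4) by (simp add: field_simps)
    then show ?thesis
      using 2 assms(2,4)
      by (simp add: riccati_residual_nth fps_square_Abs_fps_nth power2_eq_square algebra_simps)
  next
    case 3
    then show ?thesis
      using assms(3)[of "Suc k"] assms(4)
      by (simp add: riccati_residual_nth fps_square_Abs_fps_nth algebra_simps)
  qed
qed

lemma riccati_residual_nth_top:
  assumes "l \<ge> 2"
  shows "fps_nth (riccati_residual l A B (Abs_fps e)) l
           = - (\<Sum>t = 0..l - 1. e t * e (l - 1 - t))"
  using assms by (simp add: riccati_residual_nth fps_square_Abs_fps_nth)

theorem lemma3p3:
  fixes l :: nat and A B s :: complex and e :: "nat \<Rightarrow> complex"
  assumes "l \<ge> 2"
    and "of_nat l * e 0 = A"
    and "of_nat (l - 1) * e 1 = - (A^2 / (of_nat l)^2 - B)"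
    and "\<And>k. 1 \<le> k \<Longrightarrow> k \<le> l - 2 \<Longrightarrow>
           of_nat (l - (k + 1)) * e (k + 1) = - (\<Sum>t = 0..k. e t * e (k - t))"
    and "s^2 = B"
  shows "- (\<Sum>t = 0..l - 1. e t * e (l - 1 - t))
         = (-1)^l / (fact l)^2 * (\<Prod>j = 0..l. (A - of_int (int l - 2 * int j) * s))"
proof -
  define V where "V = kummer_series l A s"
  define E where "E = fps_const s - fps_deriv V * inverse V"
  have "fps_nth (riccati_residual l A B (Abs_fps e)) m = fps_nth (riccati_residual l A B E) m"
    if "m < l" for m
    using riccati_residual_nth_eq_0_below[OF assms(2-4) that]
      riccati_residual_kummer_log_deriv_nth[of m l A s] that
    by (simp add: E_def V_def assms(5)[symmetric])
  then have "- (\<Sum>t = 0..l - 1. e t * e (l - 1 - t)) = fps_nth (riccati_residual l A B E) l"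
    using riccati_residual_nth_top[OF assms(1)] riccati_residual_nth_top_determined by metis
  also have "\<dots> = (A + of_nat l * s) * kummer_coeff l A s l"
    using riccati_residual_kummer_log_deriv_nth[of l l A s]
    by (simp add: E_def V_def assms(5)[symmetric])
  also have "\<dots> = (-1)^l / (fact l)^2 * (\<Prod>j = 0..l. (A - of_int (int l - 2 * int j) * s))"
    by (simp add: kummer_coeff_top atLeast0AtMost lessThan_Suc_atMost[symmetric]
        algebra_simps add_divide_distrib)
  finally show ?thesis .
qed

end
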